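(* If $\mathcal C$ is an infinitary clone $\tau$-algebra that has no proper subalgebra, then $(\mathcal C^\downarrow)^\uparrow\cong\mathcal C$.
   Context: $\tau$ is a set of $\omega$-ary operation symbols disjoint from $\{q\}\cup\{e_i:i\in\omega\}$. An infinitary clone $\tau$-algebra is an algebra $\mathcal C$ with constants $e_i^{\mathcal C}$ ($i\in\omega$), a constant $f^{\mathcal C}$ for each $f\in\tau$, and an $\omega$-ary operation $q^{\mathcal C}$, satisfying (N1) $q(e_i,x_0,x_1,\dots)=x_i$; (N2) $q(x,e_0,e_1,\dots)=x$; (N3) $q(q(x,y_0,y_1,\dots),\boldsymbol z)=q(x,q(y_0,\boldsymbol z),q(y_1,\boldsymbol z),\dots)$. $\mathcal C^\downarrow$ is the $\tau$-algebra on $C$ in which $f$ is interpreted as $s\mapsto q^{\mathcal C}(f^{\mathcal C},s_0,s_1,\dots)$. For a $\tau$-algebra $\mathbf A$ (operations $A^\omega\to A$), $\mathbf A^\uparrow$ is the subalgebra of $\mathcal O^{(\omega)}_{\mathbf A}$ generated by its constants, where $\mathcal O^{(\omega)}_{\mathbf A}$ is the infinitary clone $\tau$-algebra of all functions $A^\omega\to A$ with $e_i(s)=s_i$, $q(g_0,g_1,\dots)(s)=g_0(g_1(s),g_2(s),\dots)$, $f\mapsto f^{\mathbf A}$ (equivalently, $\mathbf A^\uparrow$ is the set of term operations of $\mathbf A$). *)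

theory Defs
  imports "HOL-Library.FuncSet"
begin

text \<open>omega-ary operations are modelled as functions on sequences nat => 'a.
  The operation symbols tau are the elements of the type 't.\<close>

record ('c, 't) clone_alg =
  ccarrier :: "'c set"
  proj :: "nat \<Rightarrow> 'c"
  sym :: "'t \<Rightarrow> 'c"
  comp :: "'c \<Rightarrow> (nat \<Rightarrow> 'c) \<Rightarrow> 'c"

record ('a, 't) tau_alg =
  acarrier :: "'a set"
  ops :: "'t \<Rightarrow> (nat \<Rightarrow> 'a) \<Rightarrow> 'a"

definition seqs :: "'a set \<Rightarrow> (nat \<Rightarrow> 'a) set" where
  "seqs A = {s. \<forall>i. s i \<in> A}"

definition infinitary_clone_tau_algebra :: "('c, 't) clone_alg \<Rightarrow> bool" where
  "infinitary_clone_tau_algebra C \<longleftrightarrow>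
     (\<forall>i. proj C i \<in> ccarrier C) \<and>
     (\<forall>f. sym C f \<in> ccarrier C) \<and>
     (\<forall>x\<in>ccarrier C. \<forall>y\<in>seqs (ccarrier C). comp C x y \<in> ccarrier C) \<and>
     (\<forall>i. \<forall>x\<in>seqs (ccarrier C). comp C (proj C i) x = x i) \<and>
     (\<forall>x\<in>ccarrier C. comp C x (proj C) = x) \<and>
     (\<forall>x\<in>ccarrier C. \<forall>y\<in>seqs (ccarrier C). \<forall>z\<in>seqs (ccarrier C).
        comp C (comp C x y) z = comp C x (\<lambda>i. comp C (y i) z))"

definition clone_subalgebra :: "'c set \<Rightarrow> ('c, 't) clone_alg \<Rightarrow> bool" where
  "clone_subalgebra S C \<longleftrightarrow> S \<subseteq> ccarrier C \<and>
     (\<forall>i. proj C i \<in> S) \<and> (\<forall>f. sym C f \<in> S) \<and>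
     (\<forall>x\<in>S. \<forall>y\<in>seqs S. comp C x y \<in> S)"

definition no_proper_subalgebra :: "('c, 't) clone_alg \<Rightarrow> bool" where
  "no_proper_subalgebra C \<longleftrightarrow> (\<forall>S. clone_subalgebra S C \<longrightarrow> S = ccarrier C)"

definition down :: "('c, 't) clone_alg \<Rightarrow> ('c, 't) tau_alg" where
  "down C = \<lparr> acarrier = ccarrier C, ops = (\<lambda>f s. comp C (sym C f) s) \<rparr>"

text \<open>The full infinitary clone tau-algebra O_A of all functions A^omega -> A
  (represented extensionally, i.e. undefined outside A^omega).\<close>
definition full_clone :: "('a, 't) tau_alg \<Rightarrow> ((nat \<Rightarrow> 'a) \<Rightarrow> 'a, 't) clone_alg" where
  "full_clone A = \<lparr> ccarrier = (seqs (acarrier A) \<rightarrow>\<^sub>E acarrier A),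
     proj = (\<lambda>i. restrict (\<lambda>s. s i) (seqs (acarrier A))),
     sym = (\<lambda>f. restrict (ops A f) (seqs (acarrier A))),
     comp = (\<lambda>g0 g. restrict (\<lambda>s. g0 (\<lambda>i. g i s)) (seqs (acarrier A))) \<rparr>"

inductive_set generated :: "('c, 't) clone_alg \<Rightarrow> 'c set" for C where
  gen_proj: "proj C i \<in> generated C"
| gen_sym: "sym C f \<in> generated C"
| gen_comp: "x \<in> generated C \<Longrightarrow> (\<And>i. y i \<in> generated C) \<Longrightarrow> comp C x y \<in> generated C"

definition up :: "('a, 't) tau_alg \<Rightarrow> ((nat \<Rightarrow> 'a) \<Rightarrow> 'a, 't) clone_alg" where
  "up A = (full_clone A) \<lparr> ccarrier := generated (full_clone A) \<rparr>"

definition clone_iso :: "('c, 't) clone_alg \<Rightarrow> ('d, 't) clone_alg \<Rightarrow> ('c \<Rightarrow> 'd) \<Rightarrow> bool" where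
  "clone_iso C D h \<longleftrightarrow> bij_betw h (ccarrier C) (ccarrier D) \<and>
     (\<forall>i. h (proj C i) = proj D i) \<and>
     (\<forall>f. h (sym C f) = sym D f) \<and>
     (\<forall>x\<in>ccarrier C. \<forall>y\<in>seqs (ccarrier C). h (comp C x y) = comp D (h x) (\<lambda>i. h (y i)))"

definition clone_isomorphic :: "('c, 't) clone_alg \<Rightarrow> ('d, 't) clone_alg \<Rightarrow> bool" where
  "clone_isomorphic C D \<longleftrightarrow> (\<exists>h. clone_iso C D h)"

end

theory Submission
  imports Defs
begin

text \<open>Every element c of C acts on C^omega as the operation s |-> q(c, s); by (N1)-(N3) this
  representation is a homomorphism of clone algebras from C into O_{C-down}, and by (N2) it is
  injective, since c is recovered by evaluating at the sequence of projections e. A homomorphism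
  maps the subalgebra generated by the constants onto the subalgebra generated by the constants.
  When C has no proper subalgebra, C is generated by its constants, so the representation is an
  isomorphism onto (C-down)-up.\<close>

lemma proj_in_seqs:
  assumes "infinitary_clone_tau_algebra C"
  shows "proj C \<in> seqs (ccarrier C)"
  using assms by (simp add: infinitary_clone_tau_algebra_def seqs_def)

lemma clone_subalgebra_carrier:
  assumes "infinitary_clone_tau_algebra C"
  shows "clone_subalgebra (ccarrier C) C"
  using assms by (simp add: infinitary_clone_tau_algebra_def clone_subalgebra_def)

lemma generated_subset:
  assumes "clone_subalgebra S C"
  shows "generated C \<subseteq> S"
proof
  fix x assume "x \<in> generated C"
  then show "x \<in> S"
    by induction (use assms in \<open>auto simp: clone_subalgebra_def seqs_def\<close>)
qed

lemma clone_subalgebra_generated: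
  assumes "infinitary_clone_tau_algebra C"
  shows "clone_subalgebra (generated C) C"
  using generated_subset[OF clone_subalgebra_carrier[OF assms]]
  by (auto simp: clone_subalgebra_def seqs_def intro: generated.intros)

lemma generated_eq_carrier:
  assumes "infinitary_clone_tau_algebra C" and "no_proper_subalgebra C"
  shows "generated C = ccarrier C"
  using assms clone_subalgebra_generated by (auto simp: no_proper_subalgebra_def)

lemma image_generated:
  assumes proj: "\<And>i. h (proj C i) = proj D i"
    and sym: "\<And>f. h (sym C f) = sym D f"
    and comp: "\<And>x y. x \<in> generated C \<Longrightarrow> (\<And>i. y i \<in> generated C) \<Longrightarrow>
        h (comp C x y) = comp D (h x) (\<lambda>i. h (y i))"
  shows "h ` generated C = generated D"
proof
  show "h ` generated C \<subseteq> generated D"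
  proof
    fix z assume "z \<in> h ` generated C"
    then obtain x where "x \<in> generated C" "z = h x" by blast
    moreover have "h x \<in> generated D" if "x \<in> generated C" for x
      using that by induction (auto simp: proj sym comp intro: generated.intros)
    ultimately show "z \<in> generated D" by simp
  qed
next
  show "generated D \<subseteq> h ` generated C"
  proof
    fix z assume "z \<in> generated D"
    then show "z \<in> h ` generated C"
    proof induction
      case (gen_comp x y)
      obtain x' where x': "x' \<in> generated C" "x = h x'" using gen_comp.IH(1) by blast
      have "\<forall>i. \<exists>g. g \<in> generated C \<and> y i = h g" using gen_comp.IH(2) by blast
      then obtain y' where y': "\<And>i. y' i \<in> generated C" "\<And>i. y i = h (y' i)"
        by metis
      have "comp D x y = h (comp C x' y')"
        unfolding x'(2) y'(2) using comp[OF x'(1) y'(1)] by simp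
      then show ?case using x' y' by (blast intro: generated.gen_comp)
    qed (metis proj sym image_eqI generated.intros)+
  qed
qed

lemma clone_iso_inv_into:
  assumes C: "infinitary_clone_tau_algebra C" and h: "clone_iso C D h"
  shows "clone_iso D C (inv_into (ccarrier C) h)"
proof -
  let ?g = "inv_into (ccarrier C) h"
  have bij: "bij_betw h (ccarrier C) (ccarrier D)"
    using h by (simp add: clone_iso_def)
  have g_h: "?g (h x) = x" if "x \<in> ccarrier C" for x
    using bij that by (simp add: bij_betw_def)
  have g_in: "?g y \<in> ccarrier C" if "y \<in> ccarrier D" for y
    using bij that by (metis bij_betw_def inv_into_into)
  have h_g: "h (?g y) = y" if "y \<in> ccarrier D" for y
    using bij that by (simp add: bij_betw_inv_into_right)
  have "?g (comp D x y) = comp C (?g x) (\<lambda>i. ?g (y i))"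
    if x: "x \<in> ccarrier D" and y: "y \<in> seqs (ccarrier D)" for x y
  proof -
    have y': "(\<lambda>i. ?g (y i)) \<in> seqs (ccarrier C)"
      using y g_in by (simp add: seqs_def)
    have "comp D x y = h (comp C (?g x) (\<lambda>i. ?g (y i)))"
      using h g_in[OF x] y' h_g x y by (simp add: clone_iso_def seqs_def)
    moreover have "comp C (?g x) (\<lambda>i. ?g (y i)) \<in> ccarrier C"
      using C g_in[OF x] y' by (simp add: infinitary_clone_tau_algebra_def)
    ultimately show ?thesis using g_h by simp
  qed
  moreover have "?g (proj D i) = proj C i" "?g (sym D f) = sym C f" for i f
  proof -
    have "proj C i \<in> ccarrier C" "sym C f \<in> ccarrier C"
      using C by (simp_all add: infinitary_clone_tau_algebra_def)
    moreover have "h (proj C i) = proj D i" "h (sym C f) = sym D f"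
      using h by (simp_all add: clone_iso_def)
    ultimately show "?g (proj D i) = proj C i" "?g (sym D f) = sym C f"
      using g_h by metis+
  qed
  ultimately show ?thesis
    using bij by (simp add: clone_iso_def bij_betw_inv_into)
qed

definition induced_operation :: "('c, 't) clone_alg \<Rightarrow> 'c \<Rightarrow> (nat \<Rightarrow> 'c) \<Rightarrow> 'c" where
  "induced_operation C c = restrict (comp C c) (seqs (ccarrier C))"

lemma up_down_simps:
  "ccarrier (up (down C)) = generated (full_clone (down C))"
  "proj (up (down C)) = proj (full_clone (down C))"
  "sym (up (down C)) = sym (full_clone (down C))"
  "comp (up (down C)) = comp (full_clone (down C))"
  "proj (full_clone (down C)) i = restrict (\<lambda>s. s i) (seqs (ccarrier C))"
  "sym (full_clone (down C)) f = restrict (comp C (sym C f)) (seqs (ccarrier C))"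
  "comp (full_clone (down C)) g0 g = restrict (\<lambda>s. g0 (\<lambda>i. g i s)) (seqs (ccarrier C))"
  by (simp_all add: up_def full_clone_def down_def)

lemma induced_operation_proj:
  assumes "infinitary_clone_tau_algebra C"
  shows "induced_operation C (proj C i) = proj (full_clone (down C)) i"
  using assms
  by (auto simp: induced_operation_def up_down_simps infinitary_clone_tau_algebra_def
      intro!: restrict_ext)

lemma induced_operation_sym: "induced_operation C (sym C f) = sym (full_clone (down C)) f"
  by (simp add: induced_operation_def up_down_simps)

lemma induced_operation_comp:
  assumes C: "infinitary_clone_tau_algebra C"
    and x: "x \<in> ccarrier C" and y: "y \<in> seqs (ccarrier C)"
  shows "induced_operation C (comp C x y)
    = comp (full_clone (down C)) (induced_operation C x) (\<lambda>i. induced_operation C (y i))"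
  unfolding up_down_simps induced_operation_def[of C "comp C x y"]
proof (rule restrict_ext)
  fix s assume s: "s \<in> seqs (ccarrier C)"
  have ys: "(\<lambda>i. comp C (y i) s) \<in> seqs (ccarrier C)"
    using C y s by (simp add: infinitary_clone_tau_algebra_def seqs_def)
  have "comp C (comp C x y) s = comp C x (\<lambda>i. comp C (y i) s)"
    using C x y s by (simp add: infinitary_clone_tau_algebra_def)
  also have "\<dots> = induced_operation C x (\<lambda>i. induced_operation C (y i) s)"
    using s ys by (simp add: induced_operation_def)
  finally show "comp C (comp C x y) s
    = induced_operation C x (\<lambda>i. induced_operation C (y i) s)" .
qed

lemma induced_operation_at_proj:
  assumes "infinitary_clone_tau_algebra C" and "x \<in> ccarrier C"
  shows "induced_operation C x (proj C) = x"
  using assms proj_in_seqs[OF assms(1)]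
  by (simp add: induced_operation_def infinitary_clone_tau_algebra_def)

lemma clone_iso_induced_operation:
  assumes C: "infinitary_clone_tau_algebra C" and min: "no_proper_subalgebra C"
  shows "clone_iso C (up (down C)) (induced_operation C)"
proof -
  have gen: "generated C = ccarrier C"
    using generated_eq_carrier[OF C min] .
  have comp: "induced_operation C (comp C x y)
      = comp (full_clone (down C)) (induced_operation C x) (\<lambda>i. induced_operation C (y i))"
    if "x \<in> ccarrier C" "y \<in> seqs (ccarrier C)" for x y
    using induced_operation_comp[OF C that] .
  have "induced_operation C ` ccarrier C = generated (full_clone (down C))"
    unfolding gen[symmetric]
    by (rule image_generated)
      (use C gen comp in \<open>auto simp: induced_operation_proj induced_operation_sym seqs_def\<close>)
  moreover have "inj_on (induced_operation C) (ccarrier C)"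
    by (metis C induced_operation_at_proj inj_onI)
  ultimately show ?thesis
    using C comp
    by (simp add: clone_iso_def bij_betw_def up_down_simps
        induced_operation_proj induced_operation_sym)
qed

theorem proposition4p7:
  fixes C :: "('c, 't) clone_alg"
  assumes "infinitary_clone_tau_algebra C"
    and "no_proper_subalgebra C"
  shows "clone_isomorphic (up (down C)) C"
  using clone_iso_inv_into[OF assms(1) clone_iso_induced_operation[OF assms]]
  unfolding clone_isomorphic_def by blast

end
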